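(* Let $\chi$ be a Dirichlet character modulo $q$ and $\psi$ a Dirichlet character modulo $\ell$, and let $\chi^*$ modulo $q^*$ be the unique primitive Dirichlet character inducing $\chi$. Then for all $s\in\mathbb{C}$ (as an identity of meromorphic functions of $s$) $$\sum_{a\bmod q}\ \sum_{1\leq b\leq\ell}\chi(a)\psi(b)\,e(ab/q)\,\zeta\!\left(\frac{a\ell}{q},\frac{b}{\ell},s\right)=\ell^{s}\,\tau(\chi^* )\,\nu_s(\chi^*,\psi,q/q^* )\,L(\overline{\chi^*}\psi,s),$$ where $$\nu_s(\chi^*,\psi,q/q^* ):=\sum_{d\mid q/q^*}d^{1-s}\psi(d)\mu\big(q/(q^*d)\big)\chi^*\big(q/(q^*d)\big).$$ This formula also holds if $q=1$ or $\ell=1$.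
   Context: $e(x):=e^{2\pi ix}$. For $\alpha\in\mathbb{R}$, $c>0$, $\mathrm{Re}\, s>1$, the Lerch zeta function is $\zeta(\alpha,c,s)=\sum_{n\geq0}e(n\alpha)(n+c)^{-s}$, extended meromorphically in $s$. $\tau(\chi)=\sum_{a\bmod q}\chi(a)e(a/q)$ is the Gauss sum of a character $\chi$ mod $q$. $L(\chi,s)=\sum_{n\geq1}\chi(n)n^{-s}$ with meromorphic continuation; $\mu$ is the Möbius function. *)

theory Defs
  imports "HOL-Analysis.Analysis" "HOL-Computational_Algebra.Squarefree"
begin

definition ecirc :: "real \<Rightarrow> complex" where
  "ecirc x = exp (2 * of_real pi * \<i> * of_real x)"

definition dirichlet_char :: "nat \<Rightarrow> (nat \<Rightarrow> complex) \<Rightarrow> bool" where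
  "dirichlet_char q chi \<longleftrightarrow> q > 0 \<and>
     (\<forall>m n. chi (m * n) = chi m * chi n) \<and>
     (\<forall>n. chi (n + q) = chi n) \<and>
     (\<forall>n. chi n \<noteq> 0 \<longleftrightarrow> coprime n q)"

definition induces :: "nat \<Rightarrow> (nat \<Rightarrow> complex) \<Rightarrow> nat \<Rightarrow> (nat \<Rightarrow> complex) \<Rightarrow> bool" where
  "induces d psi q chi \<longleftrightarrow> d dvd q \<and> dirichlet_char d psi \<and> dirichlet_char q chi \<and>
     (\<forall>n. chi n = (if coprime n q then psi n else 0))"

definition primitive_char :: "nat \<Rightarrow> (nat \<Rightarrow> complex) \<Rightarrow> bool" where
  "primitive_char q chi \<longleftrightarrow> dirichlet_char q chi \<and>
     \<not> (\<exists>d psi. d < q \<and> induces d psi q chi)"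

definition gauss_sum :: "nat \<Rightarrow> (nat \<Rightarrow> complex) \<Rightarrow> complex" where
  "gauss_sum q chi = (\<Sum>a<q. chi a * ecirc (real a / real q))"

definition mu :: "nat \<Rightarrow> int" where
  "mu n = (if squarefree n then (-1) ^ card (prime_factors n) else 0)"

definition lerch_term :: "real \<Rightarrow> real \<Rightarrow> complex \<Rightarrow> nat \<Rightarrow> complex" where
  "lerch_term \<alpha> c s n = ecirc (real n * \<alpha>) / (complex_of_real (real n + c)) powr s"

text \<open>Series defining L(chi,s), indexed so that term k is chi(k+1) (k+1)^(-s).\<close>
definition L_term :: "(nat \<Rightarrow> complex) \<Rightarrow> complex \<Rightarrow> nat \<Rightarrow> complex" where
  "L_term chi s k = chi (Suc k) / (of_nat (Suc k)) powr s"

definition nu :: "complex \<Rightarrow> nat \<Rightarrow> (nat \<Rightarrow> complex) \<Rightarrow> (nat \<Rightarrow> complex) \<Rightarrow> nat \<Rightarrow> complex" where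
  "nu s qs chis psi r = (\<Sum>d\<in>{d. d dvd r}. (of_nat d) powr (1 - s) * psi d *
       of_int (mu (r div d)) * chis (r div d))"

end

(*
  For Re s > 1 every Lerch zeta function is its defining series.  Writing
  n l + b (n >= 0, 1 <= b <= l) as a single integer turns the left-hand side
  into l^s sum_{n >= 1} psi(n) G(chi, n) n^(-s), where
  G(chi, n) = sum_{a mod q} chi(a) e(a n / q) is the twisted Gauss sum.

  Since chis is primitive, G(chis, n) = conj(chis(n)) tau(chis) for every n,
  including n not coprime to qs.  Expanding the coprimality condition that
  separates chi from chis by Moebius inversion then gives, with r = q / qs,
  G(chi, n) = tau(chis) sum_{d | r, d | n} mu(r/d) chis(r/d) d conj(chis(n/d)),
  and substituting n = d m factors the Dirichlet series as
  tau(chis) nu_s L(conj(chis) psi, s).  Both sides are holomorphic on C - {1},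
  so the identity extends from Re s > 1 by analytic continuation.
*)
theory Submission
  imports Defs "HOL-Number_Theory.Residues" "HOL-Complex_Analysis.Complex_Analysis"
begin

section \<open>Dirichlet characters and additive characters\<close>

lemma dirichlet_char_pos: "dirichlet_char q chi \<Longrightarrow> q > 0"
  by (simp add: dirichlet_char_def)

lemma dirichlet_char_mult: "dirichlet_char q chi \<Longrightarrow> chi (m * n) = chi m * chi n"
  by (simp add: dirichlet_char_def)

lemma dirichlet_char_eq_0_iff: "dirichlet_char q chi \<Longrightarrow> chi n = 0 \<longleftrightarrow> \<not> coprime n q"
  by (auto simp: dirichlet_char_def)

lemma dirichlet_char_add_mult: "dirichlet_char q chi \<Longrightarrow> chi (n + k * q) = chi n"
proof (induction k)
  case (Suc k)
  then have "chi ((n + k * q) + q) = chi n"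
    by (simp add: dirichlet_char_def)
  then show ?case
    by (simp add: algebra_simps)
qed simp

lemma dirichlet_char_mod: "dirichlet_char q chi \<Longrightarrow> chi (n mod q) = chi n"
  using dirichlet_char_add_mult[of q chi "n mod q" "n div q"] by simp

lemma dirichlet_char_cong: "dirichlet_char q chi \<Longrightarrow> [m = n] (mod q) \<Longrightarrow> chi m = chi n"
  by (metis cong_def dirichlet_char_mod)

lemma dirichlet_char_1:
  assumes chi: "dirichlet_char q chi"
  shows "chi 1 = 1"
proof -
  have "chi 1 * chi 1 = chi 1 * 1"
    using dirichlet_char_mult[OF chi, of 1 1] by simp
  moreover have "chi 1 \<noteq> 0"
    using dirichlet_char_eq_0_iff[OF chi, of 1] by simp
  ultimately show ?thesis
    using mult_left_cancel by blast
qed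

lemma dirichlet_char_power:
  assumes chi: "dirichlet_char q chi"
  shows "chi (n ^ k) = chi n ^ k"
  using dirichlet_char_1[OF chi]
  by (induction k) (simp_all add: dirichlet_char_mult[OF chi])

lemma dirichlet_char_norm:
  assumes chi: "dirichlet_char q chi" and n: "coprime n q"
  shows "norm (chi n) = 1"
proof -
  have "chi n ^ totient q = 1"
    using euler_theorem[OF n] dirichlet_char_cong[OF chi] dirichlet_char_power[OF chi]
      dirichlet_char_1[OF chi] by metis
  then have "norm (chi n) ^ totient q = 1"
    by (metis norm_one norm_power)
  moreover have "totient q > 0"
    using dirichlet_char_pos[OF chi] by simp
  ultimately show ?thesis
    using power_eq_imp_eq_base[of "norm (chi n)" "totient q" 1] by simp
qed

lemma dirichlet_char_cnj_mult_self:
  assumes "dirichlet_char q chi" and "coprime n q"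
  shows "cnj (chi n) * chi n = 1"
proof -
  have "cnj (chi n) * chi n = complex_of_real (norm (chi n) ^ 2)"
    using complex_norm_square[of "chi n"] by (simp add: mult.commute)
  then show ?thesis
    using dirichlet_char_norm[OF assms] by simp
qed

lemma dirichlet_char_cnj_mult:
  assumes chi: "dirichlet_char q1 chi" and psi: "dirichlet_char q2 psi"
  shows "dirichlet_char (q1 * q2) (\<lambda>n. cnj (chi n) * psi n)"
  unfolding dirichlet_char_def
proof (intro conjI allI)
  show "q1 * q2 > 0"
    using dirichlet_char_pos[OF chi] dirichlet_char_pos[OF psi] by simp
  show "cnj (chi (m * n)) * psi (m * n) = cnj (chi m) * psi m * (cnj (chi n) * psi n)" for m n
    by (simp add: dirichlet_char_mult[OF chi] dirichlet_char_mult[OF psi])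
  show "cnj (chi (n + q1 * q2)) * psi (n + q1 * q2) = cnj (chi n) * psi n" for n
    using dirichlet_char_add_mult[OF chi, of n q2] dirichlet_char_add_mult[OF psi, of n q1]
    by (simp add: mult.commute)
  show "cnj (chi n) * psi n \<noteq> 0 \<longleftrightarrow> coprime n (q1 * q2)" for n
    by (simp add: dirichlet_char_eq_0_iff[OF chi] dirichlet_char_eq_0_iff[OF psi])
qed

lemma ecirc_add: "ecirc (x + y) = ecirc x * ecirc y"
  by (simp add: ecirc_def distrib_left distrib_right exp_add)

lemma ecirc_of_nat_mult: "ecirc (real k * x) = ecirc x ^ k"
  by (simp add: ecirc_def exp_of_nat_mult[symmetric] mult_ac)

lemma ecirc_of_nat: "ecirc (real k) = 1"
  using ecirc_of_nat_mult[of k 1] by (simp add: ecirc_def)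

lemma ecirc_eq_1_iff: "ecirc x = 1 \<longleftrightarrow> x \<in> \<int>"
proof -
  have "ecirc x = 1 \<longleftrightarrow> (\<exists>n::int. x = of_int n)"
    by (auto simp: ecirc_def exp_eq_1)
  then show ?thesis
    by (auto elim: Ints_cases)
qed

lemma ecirc_mod: "ecirc (real (n mod q) / real q) = ecirc (real n / real q)"
proof (cases "q = 0")
  case False
  have "real n = real (n mod q) + real (n div q) * real q"
    by (metis mod_div_mult_eq add.commute of_nat_add of_nat_mult)
  then have "real n / real q = real (n mod q) / real q + real (n div q)"
    using False by (simp add: field_simps)
  then show ?thesis
    by (simp add: ecirc_add ecirc_of_nat)
qed simp

lemma ecirc_cong: "[m = n] (mod q) \<Longrightarrow> ecirc (real m / real q) = ecirc (real n / real q)"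
  by (metis cong_def ecirc_mod)

lemma sum_ecirc_multiples:
  assumes t: "t > 0"
  shows "(\<Sum>v<t. ecirc (real (v * m) / real t)) = (if t dvd m then of_nat t else 0)"
proof -
  define z where "z = ecirc (real m / real t)"
  have sum_eq: "(\<Sum>v<t. ecirc (real (v * m) / real t)) = (\<Sum>v<t. z ^ v)"
    unfolding z_def by (simp flip: ecirc_of_nat_mult)
  have "z = 1 \<longleftrightarrow> t dvd m"
  proof -
    have "real m / real t \<in> \<int> \<longleftrightarrow> t dvd m"
      using t of_int_div_of_int_in_Ints_iff[of "int m" "int t"] by simp
    then show ?thesis
      unfolding z_def ecirc_eq_1_iff .
  qed
  moreover have "z ^ t = 1"
    using t unfolding z_def by (simp flip: ecirc_of_nat_mult add: ecirc_of_nat)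
  ultimately show ?thesis
    using sum_eq by (auto simp: geometric_sum)
qed

section \<open>Moebius function and reindexing of finite sums\<close>

lemma mu_mult_prime:
  assumes p: "prime p" and d: "\<not> p dvd d"
  shows "mu (p * d) = - mu d"
proof -
  have "d > 0"
    using d by (cases d) auto
  have "coprime p d"
    using prime_imp_coprime[OF p d] .
  then have "squarefree (p * d) \<longleftrightarrow> squarefree d"
    using squarefree_mono[of d "p * d"] squarefree_mult_coprime squarefree_prime[OF p] by auto
  moreover have "prime_factors (p * d) = insert p (prime_factors d)" "p \<notin> prime_factors d"
    using prime_factors_product[of p d] \<open>d > 0\<close> p d prime_prime_factors[of p] by auto
  ultimately show ?thesis
    by (simp add: mu_def)
qed

lemma sum_mu_divisors:
  assumes n: "n > 0"
  shows "(\<Sum>d | d dvd n. mu d) = (if n = 1 then 1 else 0)"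
proof (cases "n = 1")
  case False
  obtain p where p: "prime p" "p dvd n"
    using prime_factor_nat[OF False] by blast
  \<comment> \<open>pair each divisor d prime to p with p d; all other divisors are divisible by p^2\<close>
  define A where "A = {d. d dvd n \<and> \<not> p dvd d}"
  have "finite A"
    using n by (simp add: A_def)
  have inj: "inj_on ((*) p) A"
    using p by (auto simp: inj_on_def prime_gt_0_nat)
  have disj: "A \<inter> (*) p ` A = {}"
    by (auto simp: A_def)
  have sub: "A \<union> (*) p ` A \<subseteq> {d. d dvd n}"
    using p prime_imp_coprime by (auto simp: A_def intro: divides_mult)
  have vanish: "mu d = 0" if "d dvd n" "d \<notin> A \<union> (*) p ` A" for d
  proof -
    have "p dvd d"
      using that by (auto simp: A_def)
    then obtain k where k: "d = p * k" ..
    then have "p dvd k"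
      using that by (auto simp: A_def dest: dvd_mult_right)
    then have "p ^ 2 dvd d"
      using k by (simp add: power2_eq_square)
    moreover have "\<not> p dvd 1"
      using p(1) by auto
    ultimately show ?thesis
      by (simp add: mu_def not_squarefreeI)
  qed
  have "(\<Sum>d | d dvd n. mu d) = (\<Sum>d \<in> A \<union> (*) p ` A. mu d)"
    using sub vanish n by (intro sum.mono_neutral_right) auto
  also have "\<dots> = (\<Sum>d\<in>A. mu d + mu (p * d))"
    using \<open>finite A\<close> inj disj by (simp add: sum.union_disjoint sum.reindex sum.distrib)
  also have "\<dots> = 0"
    using mu_mult_prime[OF p(1)] by (simp add: A_def)
  finally show ?thesis
    using False by simp
next
  case True
  then show ?thesis
    by (simp add: mu_def)
qed

lemma sum_mult_mod_reindex:
  fixes g :: "nat \<Rightarrow> 'a::comm_monoid_add"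
  assumes "coprime a q"
  shows "(\<Sum>u<q. g ((a * u) mod q)) = (\<Sum>u<q. g u)"
proof (cases "q = 0")
  case False
  have "inj_on (\<lambda>u. (a * u) mod q) {..<q}"
  proof (rule inj_onI)
    fix u v assume "u \<in> {..<q}" "v \<in> {..<q}" "(a * u) mod q = (a * v) mod q"
    then show "u = v"
      using cong_mult_lcancel_nat[OF assms] by (simp add: cong_def)
  qed
  moreover have "(\<lambda>u. (a * u) mod q) ` {..<q} \<subseteq> {..<q}"
    using False by auto
  ultimately have "bij_betw (\<lambda>u. (a * u) mod q) {..<q} {..<q}"
    by (simp add: bij_betw_def endo_inj_surj)
  then show ?thesis
    by (rule sum.reindex_bij_betw)
qed simp

lemma sum_lessThan_multiples:
  fixes f :: "nat \<Rightarrow> 'a::comm_monoid_add"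
  assumes "e dvd q"
  shows "(\<Sum>a<q. if e dvd a then f a else 0) = (\<Sum>j<q div e. f (e * j))"
proof (cases "e = 0")
  case False
  have "{a\<in>{..<q}. e dvd a} = (*) e ` {..<q div e}"
    using False assms by (auto elim!: dvdE simp: image_iff)
  then have "(\<Sum>a<q. if e dvd a then f a else 0) = sum f ((*) e ` {..<q div e})"
    by (simp add: sum.inter_filter[symmetric])
  also have "\<dots> = (\<Sum>j<q div e. f (e * j))"
    using False by (simp add: sum.reindex inj_on_def)
  finally show ?thesis .
qed (use assms in simp)

lemma sum_divisors_div:
  fixes r :: nat
  assumes r: "r > 0"
  shows "(\<Sum>d | d dvd r. f d) = (\<Sum>d | d dvd r. f (r div d))"
  by (rule sum.reindex_bij_witness[of _ "\<lambda>d. r div d" "\<lambda>d. r div d"])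
    (use r in \<open>auto simp: div_div_eq_right dvd_div_eq_mult elim!: dvdE\<close>)

section \<open>Primitive characters\<close>

lemma exists_coprime_cong:
  fixes n q1 q :: nat
  assumes n: "coprime n q1" and q: "q > 0"
  shows "\<exists>m. [m = n] (mod q1) \<and> coprime m q"
proof -
  define P where "P = {p \<in> prime_factors q. \<not> p dvd n}"
  \<comment> \<open>the added multiple of q1 is divisible exactly by the primes of q not dividing n\<close>
  define m where "m = n + \<Prod>P * q1"
  have no_prime: "\<not> p dvd m" if p: "prime p" "p dvd q" for p
  proof (cases "p dvd n")
    case True
    have "\<not> p dvd q1"
      using n True p(1) coprime_common_divisor not_prime_unit by blast
    moreover have "\<not> p dvd \<Prod>P"
      using True p(1) by (auto simp: P_def prime_dvd_prod_iff dest: primes_dvd_imp_eq)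
    ultimately show ?thesis
      using True p(1) by (simp add: m_def prime_dvd_mult_iff dvd_add_right_iff)
  next
    case False
    then have "p \<in> P"
      using p q by (auto simp: P_def in_prime_factors_iff)
    moreover have "finite P"
      by (simp add: P_def)
    ultimately have "p dvd \<Prod>P * q1"
      using dvd_prodI[of P p "\<lambda>x. x"] by simp
    then show ?thesis
      using False by (simp add: m_def dvd_add_left_iff)
  qed
  have "coprime m q"
  proof (rule ccontr)
    assume "\<not> coprime m q"
    then obtain c where "c dvd m" "c dvd q" "c \<noteq> 1"
      by (auto elim: not_coprimeE)
    moreover obtain p where "prime p" "p dvd c"
      using prime_factor_nat[OF \<open>c \<noteq> 1\<close>] by blast
    ultimately show False
      using no_prime dvd_trans by blast
  qed
  moreover have "[m = n] (mod q1)"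
    by (simp add: m_def cong_def)
  ultimately show ?thesis
    by blast
qed

lemma dirichlet_char_cong_of_trivial_on_kernel:
  assumes chi: "dirichlet_char q chi" and q1: "q1 dvd q"
    and triv: "\<And>a. coprime a q \<Longrightarrow> [a = 1] (mod q1) \<Longrightarrow> chi a = 1"
    and m: "coprime m q" "coprime m' q" "[m = m'] (mod q1)"
  shows "chi m = chi m'"
proof -
  obtain i where i: "[m * i = 1] (mod q)"
    using cong_solve_coprime_nat[OF m(1)] by auto
  \<comment> \<open>m' * i represents m'/m modulo q, and it is 1 modulo q1\<close>
  have m'_eq: "[m' * (m * i) = m'] (mod q)"
    using cong_mult[OF cong_refl i] by simp
  have "coprime (m * i) q"
    using cong_imp_coprime[OF cong_sym[OF i]] by simp
  then have unit: "coprime (m' * i) q"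
    using m(2) by simp
  have "[m' * i * m = 1 * m] (mod q1)"
  proof -
    have "[m' * i * m = m'] (mod q1)"
      using cong_dvd_modulus_nat[OF m'_eq q1] by (simp add: mult_ac)
    then show ?thesis
      using cong_trans[OF _ cong_sym[OF m(3)]] by simp
  qed
  moreover have "coprime m q1"
    using coprime_divisors[OF dvd_refl q1 m(1)] .
  ultimately have "[m' * i = 1] (mod q1)"
    using cong_mult_rcancel_nat by blast
  then have "chi (m' * i) = 1"
    using triv unit by blast
  have "chi m' = chi (m' * i) * chi m"
    using dirichlet_char_cong[OF chi m'_eq] dirichlet_char_mult[OF chi] by (simp add: mult_ac)
  then show ?thesis
    using \<open>chi (m' * i) = 1\<close> by simp
qed

lemma induces_of_trivial_on_kernel:
  assumes chi: "dirichlet_char q chi" and q1: "q1 dvd q"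
    and triv: "\<And>a. coprime a q \<Longrightarrow> [a = 1] (mod q1) \<Longrightarrow> chi a = 1"
  shows "\<exists>psi. induces q1 psi q chi"
proof -
  have q: "q > 0"
    using dirichlet_char_pos[OF chi] .
  define lift where "lift n = (SOME m. [m = n] (mod q1) \<and> coprime m q)" for n
  have lift: "[lift n = n] (mod q1)" "coprime (lift n) q" if "coprime n q1" for n
    using someI_ex[OF exists_coprime_cong[OF that q]] by (simp_all add: lift_def)
  define psi where "psi n = (if coprime n q1 then chi (lift n) else 0)" for n
  have psi_eq: "psi n = chi m" if "[m = n] (mod q1)" "coprime m q" for m n
  proof -
    have n: "coprime n q1"
      using that cong_imp_coprime coprime_divisors[OF dvd_refl q1] by blast
    then have "[lift n = m] (mod q1)"
      using lift(1) that(1) by (metis cong_sym cong_trans)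
    then have "chi (lift n) = chi m"
      using dirichlet_char_cong_of_trivial_on_kernel[OF chi q1 triv] lift(2)[OF n] that(2)
      by blast
    then show ?thesis
      using n by (simp add: psi_def)
  qed
  have "dirichlet_char q1 psi"
    unfolding dirichlet_char_def
  proof (intro conjI allI)
    show "q1 > 0"
      using q q1 by (auto intro: gr0I)
    show "psi (m * n) = psi m * psi n" for m n
    proof (cases "coprime m q1 \<and> coprime n q1")
      case True
      then have "psi (m * n) = chi (lift m * lift n)"
        using lift by (intro psi_eq) (auto intro: cong_mult)
      then show ?thesis
        using True by (simp add: psi_def dirichlet_char_mult[OF chi])
    qed (auto simp: psi_def)
    show "psi (n + q1) = psi n" for n
    proof -
      have "coprime (n + q1) q1 \<longleftrightarrow> coprime n q1"
        by (metis coprime_iff_gcd_eq_1 gcd_add1)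
      moreover have "lift (n + q1) = lift n"
        by (simp add: lift_def cong_def)
      ultimately show ?thesis
        by (simp add: psi_def)
    qed
    show "psi n \<noteq> 0 \<longleftrightarrow> coprime n q1" for n
      using lift by (simp add: psi_def dirichlet_char_eq_0_iff[OF chi])
  qed
  moreover have "chi n = (if coprime n q then psi n else 0)" for n
    using psi_eq[of n n] dirichlet_char_eq_0_iff[OF chi] by auto
  ultimately show ?thesis
    using chi q1 by (auto simp: induces_def)
qed

lemma primitive_char_nontrivial_on_kernel:
  assumes prim: "primitive_char q chi" and q1: "q1 dvd q" "q1 < q"
  shows "\<exists>a. coprime a q \<and> [a = 1] (mod q1) \<and> chi a \<noteq> 1"
  using induces_of_trivial_on_kernel[of q chi q1] prim q1 by (auto simp: primitive_char_def)

section \<open>Twisted Gauss sums\<close>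

definition twisted_gauss_sum :: "nat \<Rightarrow> (nat \<Rightarrow> complex) \<Rightarrow> nat \<Rightarrow> complex" where
  "twisted_gauss_sum q chi m = (\<Sum>a<q. chi a * ecirc (real (a * m) / real q))"

lemma twisted_gauss_sum_1: "twisted_gauss_sum q chi 1 = gauss_sum q chi"
  by (simp add: twisted_gauss_sum_def gauss_sum_def)

lemma twisted_gauss_sum_cong:
  assumes "[m = n] (mod q)"
  shows "twisted_gauss_sum q chi m = twisted_gauss_sum q chi n"
  unfolding twisted_gauss_sum_def using ecirc_cong[OF cong_mult[OF cong_refl assms]] by simp

lemma twisted_gauss_sum_mult_coprime:
  assumes chi: "dirichlet_char q chi" and a: "coprime a q"
  shows "twisted_gauss_sum q chi n = chi a * twisted_gauss_sum q chi (a * n)"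
proof -
  have "twisted_gauss_sum q chi n
      = (\<Sum>u<q. chi ((a * u) mod q) * ecirc (real ((a * u) mod q * n) / real q))"
    unfolding twisted_gauss_sum_def
    using sum_mult_mod_reindex[OF a, of "\<lambda>x. chi x * ecirc (real (x * n) / real q)"] by simp
  also have "\<dots> = (\<Sum>u<q. chi a * (chi u * ecirc (real (u * (a * n)) / real q)))"
  proof (intro sum.cong refl)
    fix u
    have "[(a * u) mod q * n = u * (a * n)] (mod q)"
      unfolding cong_def by (metis mod_mult_left_eq mult.assoc mult.commute)
    then have "ecirc (real ((a * u) mod q * n) / real q) = ecirc (real (u * (a * n)) / real q)"
      by (rule ecirc_cong)
    moreover have "chi ((a * u) mod q) = chi a * chi u"
      by (simp add: dirichlet_char_mod[OF chi] dirichlet_char_mult[OF chi])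
    ultimately show "chi ((a * u) mod q) * ecirc (real ((a * u) mod q * n) / real q)
        = chi a * (chi u * ecirc (real (u * (a * n)) / real q))"
      by (simp only: mult.assoc)
  qed
  finally show ?thesis
    by (simp add: twisted_gauss_sum_def sum_distrib_left)
qed

lemma twisted_gauss_sum_coprime:
  assumes chi: "dirichlet_char q chi" and n: "coprime n q"
  shows "twisted_gauss_sum q chi n = cnj (chi n) * gauss_sum q chi"
proof -
  have "gauss_sum q chi = chi n * twisted_gauss_sum q chi n"
    using twisted_gauss_sum_mult_coprime[OF chi n, of 1]
    unfolding mult_1_right twisted_gauss_sum_1 .
  then show ?thesis
    using dirichlet_char_cnj_mult_self[OF chi n] by (simp add: mult.assoc[symmetric])
qed

lemma twisted_gauss_sum_primitive_not_coprime:
  assumes prim: "primitive_char q chi" and n: "\<not> coprime n q"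
  shows "twisted_gauss_sum q chi n = 0"
proof -
  have chi: "dirichlet_char q chi"
    using prim by (simp add: primitive_char_def)
  define g where "g = gcd n q"
  define q1 where "q1 = q div g"
  have q: "q = g * q1" and "g \<noteq> 1" "q > 0"
    using n dirichlet_char_pos[OF chi] by (simp_all add: g_def q1_def coprime_iff_gcd_eq_1)
  then have "q1 dvd q" "q1 < q"
    by (auto intro: gr0I)
  \<comment> \<open>a n is congruent to n modulo q, while the sum at n is chi a times the sum at a n\<close>
  then obtain a where a: "coprime a q" "[a = 1] (mod q1)" "chi a \<noteq> 1"
    using primitive_char_nontrivial_on_kernel[OF prim] by blast
  obtain n' where n': "n = g * n'"
    by (metis dvd_mult_div_cancel gcd_dvd1 g_def)
  have "[g * (a * n') = g * (1 * n')] (mod q)"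
    unfolding q by (intro cong_cmult_leftI cong_mult a(2) cong_refl)
  then have "twisted_gauss_sum q chi (a * n) = twisted_gauss_sum q chi n"
    using twisted_gauss_sum_cong n' by (simp add: mult.left_commute)
  then have "(1 - chi a) * twisted_gauss_sum q chi n = 0"
    using twisted_gauss_sum_mult_coprime[OF chi a(1), of n] by (simp add: algebra_simps)
  then show ?thesis
    using a(3) by simp
qed

lemma twisted_gauss_sum_primitive:
  assumes prim: "primitive_char q chi"
  shows "twisted_gauss_sum q chi n = cnj (chi n) * gauss_sum q chi"
proof -
  have chi: "dirichlet_char q chi"
    using prim by (simp add: primitive_char_def)
  show ?thesis
    using twisted_gauss_sum_coprime[OF chi] twisted_gauss_sum_primitive_not_coprime[OF prim]
      dirichlet_char_eq_0_iff[OF chi] by (cases "coprime n q") simp_all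
qed

lemma twisted_gauss_sum_mult_modulus:
  assumes chi: "dirichlet_char q chi" and t: "t > 0"
  shows "twisted_gauss_sum (q * t) chi m
    = (if t dvd m then of_nat t * twisted_gauss_sum q chi (m div t) else 0)"
proof -
  have q: "q > 0"
    using dirichlet_char_pos[OF chi] .
  define f where "f j = chi j * ecirc (real (j * m) / real (q * t))" for j
  have "twisted_gauss_sum (q * t) chi m = (\<Sum>j<q * t. f j)"
    by (simp add: twisted_gauss_sum_def f_def)
  also have "\<dots> = (\<Sum>v<t. sum f {v * q..<v * q + q})"
    using sum.nat_group[of f q t] by (simp add: mult.commute)
  also have "\<dots> = (\<Sum>v<t. \<Sum>u<q. f (u + v * q))"
  proof (rule sum.cong[OF refl])
    fix v
    show "sum f {v * q..<v * q + q} = (\<Sum>u<q. f (u + v * q))"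
      using sum.shift_bounds_nat_ivl[of f 0 "v * q" q] by (simp add: atLeast0LessThan add.commute)
  qed
  also have "\<dots> = (\<Sum>v<t. \<Sum>u<q. f u * ecirc (real (v * m) / real t))"
  proof (intro sum.cong refl)
    fix u v
    have "real ((u + v * q) * m) / real (q * t) = real (u * m) / real (q * t) + real (v * m) / real t"
      using q t by (simp add: field_simps)
    then show "f (u + v * q) = f u * ecirc (real (v * m) / real t)"
      by (simp add: f_def ecirc_add dirichlet_char_add_mult[OF chi])
  qed
  also have "\<dots> = (\<Sum>u<q. f u) * (\<Sum>v<t. ecirc (real (v * m) / real t))"
    by (simp add: sum_distrib_left sum_distrib_right sum.swap[of _ "{..<t}"])
  also have "\<dots> = (if t dvd m then of_nat t * twisted_gauss_sum q chi (m div t) else 0)"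
  proof (cases "t dvd m")
    case True
    then have "f u = chi u * ecirc (real (u * (m div t)) / real q)" for u
      using t by (auto simp: f_def)
    then show ?thesis
      using True sum_ecirc_multiples[OF t, of m] by (simp add: twisted_gauss_sum_def)
  qed (use sum_ecirc_multiples[OF t, of m] in simp)
  finally show ?thesis .
qed

lemma induced_char_eq_sum_mu:
  assumes ind: "induces qs chis q chi"
  shows "chi a = chis a * (\<Sum>e | e dvd q div qs. if e dvd a then of_int (mu e) else 0)"
proof -
  define r where "r = q div qs"
  have chis: "dirichlet_char qs chis" and chi: "\<And>n. chi n = (if coprime n q then chis n else 0)"
    and q: "q = qs * r" and "q > 0"
    using ind by (auto simp: induces_def r_def dirichlet_char_pos)
  then have "r > 0"
    by (auto intro: gr0I)
  have "{e. e dvd r \<and> e dvd a} = {e. e dvd gcd a r}"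
    by auto
  then have "(\<Sum>e | e dvd r. if e dvd a then of_int (mu e) else 0)
      = (of_int (\<Sum>e | e dvd gcd a r. mu e) :: complex)"
    using \<open>r > 0\<close> by (simp add: sum.inter_filter[symmetric])
  also have "\<dots> = (if coprime a r then 1 else 0)"
    using sum_mu_divisors[of "gcd a r"] \<open>r > 0\<close> by (simp add: coprime_iff_gcd_eq_1)
  finally show ?thesis
    using chi[of a] dirichlet_char_eq_0_iff[OF chis, of a] dirichlet_char_pos[OF chis]
    unfolding q r_def[symmetric]
    by (cases "coprime a qs") simp_all
qed

lemma twisted_gauss_sum_induced:
  assumes ind: "induces qs chis q chi"
  shows "twisted_gauss_sum q chi m
    = (\<Sum>e | e dvd q div qs. of_int (mu e) * chis e * twisted_gauss_sum (q div e) chis m)"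
proof -
  define r where "r = q div qs"
  have chis: "dirichlet_char qs chis" and q: "q = qs * r" and "q > 0"
    using ind by (auto simp: induces_def r_def dirichlet_char_pos)
  define X where "X a = chis a * ecirc (real (a * m) / real q)" for a
  have "twisted_gauss_sum q chi m
      = (\<Sum>a<q. \<Sum>e | e dvd r. if e dvd a then of_int (mu e) * X a else 0)"
    unfolding twisted_gauss_sum_def X_def induced_char_eq_sum_mu[OF ind] r_def[symmetric]
    by (simp add: sum_distrib_left sum_distrib_right if_distrib mult_ac cong: if_cong)
  also have "\<dots> = (\<Sum>e | e dvd r. of_int (mu e) * (\<Sum>a<q. if e dvd a then X a else 0))"
    by (subst sum.swap) (simp add: sum_distrib_left if_distrib cong: if_cong)
  also have "\<dots> = (\<Sum>e | e dvd r. of_int (mu e) * chis e * twisted_gauss_sum (q div e) chis m)"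
  proof (rule sum.cong[OF refl])
    fix e assume "e \<in> {e. e dvd r}"
    then have e: "e dvd q" "e > 0"
      using q \<open>q > 0\<close> by (auto intro: gr0I)
    have "(\<Sum>a<q. if e dvd a then X a else 0) = (\<Sum>j<q div e. X (e * j))"
      using e(1) by (rule sum_lessThan_multiples)
    also have "\<dots> = chis e * twisted_gauss_sum (q div e) chis m"
      using e by (simp add: X_def twisted_gauss_sum_def sum_distrib_left real_of_nat_div
          dirichlet_char_mult[OF chis] mult_ac)
    finally show "of_int (mu e) * (\<Sum>a<q. if e dvd a then X a else 0)
        = of_int (mu e) * chis e * twisted_gauss_sum (q div e) chis m"
      by (simp add: mult.assoc)
  qed
  finally show ?thesis
    by (simp add: r_def)
qed

lemma twisted_gauss_sum_induced_primitive:
  assumes prim: "primitive_char qs chis" and ind: "induces qs chis q chi"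
  shows "twisted_gauss_sum q chi m = gauss_sum qs chis *
    (\<Sum>d | d dvd q div qs. of_int (mu (q div qs div d)) * chis (q div qs div d) *
       (if d dvd m then of_nat d * cnj (chis (m div d)) else 0))"
proof -
  define r where "r = q div qs"
  define c where "c d = of_int (mu (r div d)) * chis (r div d)" for d
  have chis: "dirichlet_char qs chis" and q: "q = qs * r" and "q > 0"
    using ind by (auto simp: induces_def r_def dirichlet_char_pos)
  then have r: "r > 0"
    by (auto intro: gr0I)
  have "twisted_gauss_sum q chi m
      = (\<Sum>e | e dvd r. of_int (mu e) * chis e * twisted_gauss_sum (qs * (r div e)) chis m)"
    unfolding twisted_gauss_sum_induced[OF ind] r_def[symmetric]
    by (intro sum.cong refl) (simp add: q div_mult_swap)
  also have "\<dots> = (\<Sum>d | d dvd r. c d * twisted_gauss_sum (qs * d) chis m)"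
    unfolding c_def by (subst sum_divisors_div[OF r]) (auto intro!: sum.cong simp: div_div_eq_right r)
  also have "\<dots> = gauss_sum qs chis *
      (\<Sum>d | d dvd r. c d * (if d dvd m then of_nat d * cnj (chis (m div d)) else 0))"
    unfolding sum_distrib_left
    using r twisted_gauss_sum_mult_modulus[OF chis] twisted_gauss_sum_primitive[OF prim]
    by (intro sum.cong refl) (auto simp: mult_ac intro: gr0I)
  finally show ?thesis
    by (simp add: c_def r_def)
qed

section \<open>Dirichlet series\<close>

lemma sums_at_multiples:
  fixes a :: "nat \<Rightarrow> 'a::real_normed_vector"
  assumes d: "d > 0" and a: "a sums S"
  shows "(\<lambda>k. if d dvd Suc k then a (Suc k div d - 1) else 0) sums S"
proof -
  \<comment> \<open>term j of a sits at index g j, i.e. at the position of the integer d (j + 1)\<close>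
  define g where "g j = d * Suc j - 1" for j
  have Suc_g: "Suc (g j) = d * Suc j" for j
    using d by (simp add: g_def)
  have "strict_mono g"
    by (rule strict_monoI) (metis Suc_g Suc_less_eq d mult_less_cancel1 Suc_mono)
  moreover have "\<not> d dvd Suc n" if "n \<notin> range g" for n
  proof
    assume "d dvd Suc n"
    then obtain k where k: "Suc n = d * k"
      by blast
    then have "k > 0"
      by (cases k) auto
    then have "Suc (g (k - 1)) = Suc n"
      by (simp add: Suc_g k)
    then show False
      using that by (metis Suc_inject rangeI)
  qed
  moreover have "(\<lambda>j. if d dvd Suc (g j) then a (Suc (g j) div d - 1) else 0) = a"
    using d by (simp add: Suc_g)
  ultimately show ?thesis
    using a sums_mono_reindex[of g "\<lambda>k. if d dvd Suc k then a (Suc k div d - 1) else 0" S]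
    by auto
qed

lemma L_term_dilated_sums:
  assumes psi: "dirichlet_char l psi" and d: "d > 0"
    and L: "L_term (\<lambda>n. f n * psi n) s sums Lv"
  shows "(\<lambda>k. if d dvd Suc k then psi (Suc k) * f (Suc k div d) / of_nat (Suc k) powr s else 0)
    sums (psi d / of_nat d powr s * Lv)"
proof -
  have "(\<lambda>k. if d dvd Suc k then psi d / of_nat d powr s * L_term (\<lambda>n. f n * psi n) s (Suc k div d - 1)
      else 0) sums (psi d / of_nat d powr s * Lv)"
    using sums_at_multiples[OF d sums_mult[OF L]] .
  moreover have "psi d / of_nat d powr s * L_term (\<lambda>n. f n * psi n) s (Suc k div d - 1)
      = psi (Suc k) * f (Suc k div d) / of_nat (Suc k) powr s" if "d dvd Suc k" for k
  proof -
    obtain j where j: "Suc k = d * j" "j > 0"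
      using \<open>d dvd Suc k\<close> by (metis dvdE mult_0_right nat.distinct(1) gr0I)
    have "(of_nat (d * j) :: complex) powr s = of_nat d powr s * of_nat j powr s"
      by (simp add: powr_times_real)
    then show ?thesis
      using j d by (simp add: L_term_def dirichlet_char_mult[OF psi])
  qed
  ultimately show ?thesis
    by (simp cong: if_cong)
qed

lemma lerch_term_rescale:
  assumes l: "l > 0"
  shows "ecirc (real (a * b) / real q) * lerch_term (real (a * l) / real q) (real b / real l) s n
    = of_nat l powr s * ecirc (real (a * (n * l + b)) / real q) / of_nat (n * l + b) powr s"
proof -
  have "real (a * b) / real q + real n * (real (a * l) / real q) = real (a * (n * l + b)) / real q"
    by (simp add: algebra_simps add_divide_distrib)
  then have e: "ecirc (real (a * b) / real q) * ecirc (real n * (real (a * l) / real q))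
      = ecirc (real (a * (n * l + b)) / real q)"
    by (metis ecirc_add)
  have prod: "complex_of_real (real n + real b / real l) * of_nat l = of_nat (n * l + b)"
    using l by (simp add: field_simps)
  have "(of_nat (n * l + b) :: complex) powr s
      = complex_of_real (real n + real b / real l) powr s * of_nat l powr s"
    unfolding prod[symmetric] by (rule powr_times_real) auto
  then show ?thesis
    using l e by (simp add: lerch_term_def field_simps)
qed

lemma sum_lerch_eq_dirichlet_series:
  assumes psi: "dirichlet_char l psi"
    and Z: "\<And>\<alpha> c. c > 0 \<Longrightarrow> lerch_term \<alpha> c s sums Z \<alpha> c s"
    and D: "(\<lambda>k. psi (Suc k) * twisted_gauss_sum q chi (Suc k) / of_nat (Suc k) powr s) sums D"
  shows "(\<Sum>a<q. \<Sum>b=1..l. chi a * psi b * ecirc (real (a * b) / real q) *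
      Z (real (a * l) / real q) (real b / real l) s) = of_nat l powr s * D"
proof -
  define T where "T k = psi (Suc k) * twisted_gauss_sum q chi (Suc k) / of_nat (Suc k) powr s" for k
  define F where "F a b n = chi a * psi b * ecirc (real (a * b) / real q) *
      lerch_term (real (a * l) / real q) (real b / real l) s n" for a b n
  have l: "l > 0"
    using dirichlet_char_pos[OF psi] .
  have "(\<lambda>n. \<Sum>a<q. \<Sum>b=1..l. F a b n) sums (\<Sum>a<q. \<Sum>b=1..l. chi a * psi b *
      ecirc (real (a * b) / real q) * Z (real (a * l) / real q) (real b / real l) s)"
    unfolding F_def using l by (intro sums_sum sums_mult Z) simp
  \<comment> \<open>block n of the Dirichlet series collects the integers n l + b with 1 \<le> b \<le> l\<close>
  moreover have "(\<Sum>a<q. \<Sum>b=1..l. F a b n) = of_nat l powr s * sum T {n * l..<n * l + l}" for n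
  proof -
    have "sum T {n * l..<n * l + l} = (\<Sum>b=1..l. T (n * l + b - 1))"
      by (rule sum.reindex_bij_witness[of _ "\<lambda>b. n * l + b - 1" "\<lambda>k. k + 1 - n * l"]) auto
    also have "\<dots> = (\<Sum>b=1..l. \<Sum>a<q. chi a * psi b * ecirc (real (a * (n * l + b)) / real q) /
        of_nat (n * l + b) powr s)"
    proof (rule sum.cong[OF refl])
      fix b assume "b \<in> {1..l}"
      then have "Suc (n * l + b - 1) = n * l + b"
        by simp
      moreover have "psi (n * l + b) = psi b"
        using dirichlet_char_add_mult[OF psi, of b n] by (simp add: add.commute)
      ultimately show "T (n * l + b - 1) = (\<Sum>a<q. chi a * psi b *
          ecirc (real (a * (n * l + b)) / real q) / of_nat (n * l + b) powr s)"
        by (simp add: T_def twisted_gauss_sum_def sum_distrib_left sum_divide_distrib mult_ac)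
    qed
    moreover have "F a b n = chi a * psi b *
        (of_nat l powr s * ecirc (real (a * (n * l + b)) / real q) / of_nat (n * l + b) powr s)"
      for a b
      unfolding F_def using lerch_term_rescale[OF l, of a b q s n] by (metis mult.assoc)
    ultimately show ?thesis
      by (subst sum.swap) (simp add: sum_distrib_left mult_ac)
  qed
  then have "(\<lambda>n. \<Sum>a<q. \<Sum>b=1..l. F a b n) sums (of_nat l powr s * D)"
    using sums_mult[OF sums_group[OF D[folded T_def] l]] by simp
  ultimately show ?thesis
    using sums_unique2 by blast
qed

lemma twisted_gauss_sum_dirichlet_series:
  assumes psi: "dirichlet_char l psi" and prim: "primitive_char qs chis"
    and ind: "induces qs chis q chi"
    and L: "L_term (\<lambda>n. cnj (chis n) * psi n) s sums Lv"
  shows "(\<lambda>k. psi (Suc k) * twisted_gauss_sum q chi (Suc k) / of_nat (Suc k) powr s)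
    sums (gauss_sum qs chis * nu s qs chis psi (q div qs) * Lv)"
proof -
  define r where "r = q div qs"
  define \<tau> where "\<tau> = gauss_sum qs chis"
  define c where "c d = of_int (mu (r div d)) * chis (r div d)" for d
  define T where "T d k = (if d dvd Suc k
      then psi (Suc k) * cnj (chis (Suc k div d)) / of_nat (Suc k) powr s else 0)" for d k
  have "q > 0" "q = qs * r"
    using ind by (auto simp: induces_def dirichlet_char_pos r_def)
  then have "r > 0"
    by (auto intro: gr0I)
  then have d_pos: "d > 0" if "d \<in> {d. d dvd r}" for d
    using that by (auto intro: gr0I)
  have "psi (Suc k) * twisted_gauss_sum q chi (Suc k) / of_nat (Suc k) powr s
      = (\<Sum>d | d dvd r. \<tau> * c d * of_nat d * T d k)" for k
    unfolding twisted_gauss_sum_induced_primitive[OF prim ind] T_def c_def \<tau>_def r_def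
      sum_distrib_left sum_divide_distrib
    by (intro sum.cong refl) (simp add: mult_ac)
  moreover have "(\<lambda>k. \<Sum>d | d dvd r. \<tau> * c d * of_nat d * T d k)
      sums (\<Sum>d | d dvd r. \<tau> * c d * of_nat d * (psi d / of_nat d powr s * Lv))"
    unfolding T_def using L_term_dilated_sums[OF psi d_pos L] by (intro sums_sum sums_mult) auto
  moreover have "(\<Sum>d | d dvd r. \<tau> * c d * of_nat d * (psi d / of_nat d powr s * Lv))
      = \<tau> * nu s qs chis psi r * Lv"
    unfolding nu_def c_def sum_distrib_left sum_distrib_right
    using d_pos by (intro sum.cong refl) (simp add: powr_diff mult_ac)
  ultimately show ?thesis
    by (simp add: \<tau>_def r_def)
qed

lemma analytic_continuation_half_plane:
  fixes f g :: "complex \<Rightarrow> complex"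
  assumes f: "f holomorphic_on UNIV - {w}" and g: "g holomorphic_on UNIV - {w}"
    and eq: "\<And>z. Re z > c \<Longrightarrow> f z = g z" and z: "z \<noteq> w"
  shows "f z = g z"
proof (rule analytic_continuation_open[OF _ _ _ _ _ f g])
  show "open {z. Re z > max c (Re w)}" "open (UNIV - {w})"
    by (rule open_halfspace_Re_gt, simp add: open_Diff)
  show "{z. Re z > max c (Re w)} \<noteq> {}"
  proof -
    have "complex_of_real (max c (Re w) + 1) \<in> {z. Re z > max c (Re w)}"
      by (simp add: max_def)
    then show ?thesis
      by blast
  qed
  show "connected (UNIV - {w})"
    using connected_punctured_universe[of w] by (simp add: Compl_eq_Diff_UNIV)
qed (use eq z in auto)

theorem proposition2p2:
  fixes q l qs :: nat and chi psi chis :: "nat \<Rightarrow> complex"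
    and Z :: "real \<Rightarrow> real \<Rightarrow> complex \<Rightarrow> complex"
    and L :: "(nat \<Rightarrow> complex) \<Rightarrow> complex \<Rightarrow> complex"
  assumes chi: "dirichlet_char q chi"
    and psi: "dirichlet_char l psi"
    and prim: "primitive_char qs chis"
    and ind: "induces qs chis q chi"
    and Z_hol: "\<And>\<alpha> c. c > 0 \<Longrightarrow> Z \<alpha> c holomorphic_on (UNIV - {1})"
    and Z_ser: "\<And>\<alpha> c s. c > 0 \<Longrightarrow> Re s > 1 \<Longrightarrow> lerch_term \<alpha> c s sums Z \<alpha> c s"
    and L_hol: "\<And>m f. dirichlet_char m f \<Longrightarrow> L f holomorphic_on (UNIV - {1})"
    and L_ser: "\<And>m f s. dirichlet_char m f \<Longrightarrow> Re s > 1 \<Longrightarrow> L_term f s sums L f s"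
    and s1: "s \<noteq> 1"
  shows "(\<Sum>a<q. \<Sum>b=1..l. chi a * psi b * ecirc (real (a * b) / real q) *
            Z (real (a * l) / real q) (real b / real l) s)
         = (of_nat l) powr s * gauss_sum qs chis * nu s qs chis psi (q div qs) *
            L (\<lambda>n. cnj (chis n) * psi n) s"
proof -
  define lhs where "lhs z = (\<Sum>a<q. \<Sum>b=1..l. chi a * psi b * ecirc (real (a * b) / real q) *
      Z (real (a * l) / real q) (real b / real l) z)" for z
  define rhs where "rhs z = of_nat l powr z * gauss_sum qs chis * nu z qs chis psi (q div qs) *
      L (\<lambda>n. cnj (chis n) * psi n) z" for z
  have L_char: "dirichlet_char (qs * l) (\<lambda>n. cnj (chis n) * psi n)"
    using prim psi by (simp add: primitive_char_def dirichlet_char_cnj_mult)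
  have "lhs holomorphic_on UNIV - {1}"
    unfolding lhs_def using dirichlet_char_pos[OF psi] by (intro holomorphic_intros Z_hol) auto
  moreover have "rhs holomorphic_on UNIV - {1}"
    unfolding rhs_def nu_def by (intro holomorphic_intros L_hol[OF L_char])
  moreover have "lhs z = rhs z" if "Re z > 1" for z
    using sum_lerch_eq_dirichlet_series[where Z = Z, OF psi Z_ser[OF _ that]
        twisted_gauss_sum_dirichlet_series[OF psi prim ind L_ser[OF L_char that]]] that
    by (simp add: lhs_def rhs_def mult.assoc)
  ultimately have "lhs s = rhs s"
    using s1 by (rule analytic_continuation_half_plane)
  then show ?thesis
    by (simp add: lhs_def rhs_def)
qed

end
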